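(* Let $X$ be a real Hilbert space and $f:X\to\mathbb{R}$ a proper $\Phi_{lsc}$-convex function. If $f$ is locally $C^{1,1}$ around $\bar x\in X$, then there exists $\delta>0$ such that $\partial_{lsc}f(y)\ne\emptyset$ for every $y$ with $\|y-\bar x\|<\delta$.
   Context: $\Phi_{lsc}$ is the class of functions $\varphi(x)=-a\|x\|^2+\langle v,x\rangle+c$ ($a\ge0$, $v\in X^*$, $c\in\mathbb{R}$); $f$ is $\Phi_{lsc}$-convex if it is the pointwise supremum of the $\varphi\in\Phi_{lsc}$ with $\varphi\le f$; proper means at least one such $\varphi$ exists. $f$ is locally $C^{1,1}$ around $\bar x$ if there is a ball $B(\delta,\bar x)=\{y:\|y-\bar x\|<\delta\}$ on which $f$ is Gâteaux differentiable and its Gâteaux derivative is Lipschitz continuous. $\partial_{lsc}f(y)$ is the set of $(a,v)\in\mathbb{R}_+\times X^*$ with $f(x)-f(y)\ge\langle v,x-y\rangle-a\|x\|^2+a\|y\|^2$ for all $x\in X$. *)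

theory Defs
  imports "HOL-Analysis.Analysis"
begin

text \<open>Elements of the dual space X^* are represented as bounded linear functionals.\<close>

definition Phi_lsc :: "('a::real_normed_vector \<Rightarrow> real) set" where
  "Phi_lsc = {\<phi>. \<exists>a v c. a \<ge> 0 \<and> bounded_linear v \<and>
                 \<phi> = (\<lambda>x. - a * (norm x)\<^sup>2 + v x + c)}"

definition Phi_lsc_minorants :: "('a::real_normed_vector \<Rightarrow> real) \<Rightarrow> ('a \<Rightarrow> real) set" where
  "Phi_lsc_minorants f = {\<phi> \<in> Phi_lsc. \<forall>x. \<phi> x \<le> f x}"

definition Phi_lsc_convex :: "('a::real_normed_vector \<Rightarrow> real) \<Rightarrow> bool" where
  "Phi_lsc_convex f \<longleftrightarrow> (\<forall>x. f x = (SUP \<phi>\<in>Phi_lsc_minorants f. \<phi> x))"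

definition Phi_lsc_proper :: "('a::real_normed_vector \<Rightarrow> real) \<Rightarrow> bool" where
  "Phi_lsc_proper f \<longleftrightarrow> Phi_lsc_minorants f \<noteq> {}"

definition gateaux_deriv :: "('a::real_normed_vector \<Rightarrow> real) \<Rightarrow> 'a \<Rightarrow> ('a \<Rightarrow> real) \<Rightarrow> bool" where
  "gateaux_deriv f y D \<longleftrightarrow> bounded_linear D \<and>
     (\<forall>h. ((\<lambda>t. (f (y + t *\<^sub>R h) - f y) / t) \<longlongrightarrow> D h) (at 0))"

definition locally_C11 :: "('a::real_normed_vector \<Rightarrow> real) \<Rightarrow> 'a \<Rightarrow> bool" where
  "locally_C11 f xbar \<longleftrightarrow> (\<exists>\<delta>>0. \<exists>Df L.
      (\<forall>y. norm (y - xbar) < \<delta> \<longrightarrow> gateaux_deriv f y (Df y)) \<and>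
      (\<forall>y z. norm (y - xbar) < \<delta> \<longrightarrow> norm (z - xbar) < \<delta> \<longrightarrow>
          onorm (\<lambda>h. Df y h - Df z h) \<le> L * norm (y - z)))"

definition subdiff_lsc :: "('a::real_normed_vector \<Rightarrow> real) \<Rightarrow> 'a \<Rightarrow> (real \<times> ('a \<Rightarrow> real)) set" where
  "subdiff_lsc f y = {(a, v). a \<ge> 0 \<and> bounded_linear v \<and>
      (\<forall>x. f x - f y \<ge> v (x - y) - a * (norm x)\<^sup>2 + a * (norm y)\<^sup>2)}"

end

theory Submission
  imports Defs
begin

text \<open>Fix \<open>y\<close> near \<open>xbar\<close> with Gateaux derivative \<open>w\<close> there. Near \<open>y\<close>, the mean value theorem
  along segments and the Lipschitz bound on the derivative give
  \<open>f (y + h) \<ge> f y + w h - \<bar>L\<bar> \<parallel>h\<parallel>\<^sup>2\<close>; away from \<open>y\<close>, a single \<open>\<Phi>\<^sub>l\<^sub>s\<^sub>c\<close> minorant, which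
  exists by properness, grows at most quadratically downwards, so the same bound holds
  with a larger constant. A global bound \<open>f (y + h) \<ge> f y + w h - a \<parallel>h\<parallel>\<^sup>2\<close> is, in an inner
  product space, exactly the statement \<open>(a, w + 2a\<langle>y,\<cdot>\<rangle>) \<in> \<partial>\<^sub>l\<^sub>s\<^sub>c f y\<close>, because
  \<open>\<parallel>y + h\<parallel>\<^sup>2 = \<parallel>y\<parallel>\<^sup>2 + 2\<langle>y,h\<rangle> + \<parallel>h\<parallel>\<^sup>2\<close>.\<close>

lemma gateaux_deriv_along_line:
  assumes "gateaux_deriv f (y + t *\<^sub>R h) D"
  shows "((\<lambda>s. f (y + s *\<^sub>R h)) has_real_derivative D h) (at t)"
proof -
  have "((\<lambda>s. (f (y + t *\<^sub>R h + s *\<^sub>R h) - f (y + t *\<^sub>R h)) / s) \<longlongrightarrow> D h) (at 0)"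
    using assms unfolding gateaux_deriv_def by blast
  moreover have "y + t *\<^sub>R h + s *\<^sub>R h = y + (t + s) *\<^sub>R h" for s
    by (simp add: scaleR_add_left add.assoc)
  ultimately show ?thesis
    unfolding DERIV_def by simp
qed

lemma quadratic_lower_bound_near:
  fixes f :: "'a::real_normed_vector \<Rightarrow> real"
  assumes gd: "\<And>z. norm (z - y) < r \<Longrightarrow> gateaux_deriv f z (Df z)"
    and lip: "\<And>z. norm (z - y) < r \<Longrightarrow> onorm (\<lambda>h. Df z h - Df y h) \<le> L * norm (z - y)"
    and h: "norm h < r"
  shows "f y + Df y h - \<bar>L\<bar> * (norm h)\<^sup>2 \<le> f (y + h)"
proof -
  have on_segment: "norm (y + t *\<^sub>R h - y) < r" if "0 \<le> t" "t \<le> 1" for t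
    using h that mult_left_le_one_le[of "norm h" t] by simp
  obtain t where t: "0 < t" "t < 1"
    and mvt: "f (y + h) - f y = Df (y + t *\<^sub>R h) h"
    using MVT2[of 0 1 "\<lambda>s. f (y + s *\<^sub>R h)" "\<lambda>s. Df (y + s *\<^sub>R h) h"]
      gateaux_deriv_along_line[OF gd[OF on_segment]] by auto
  let ?z = "y + t *\<^sub>R h"
  have "bounded_linear (Df ?z)" "bounded_linear (Df y)"
    using gd[OF on_segment[of t]] gd[of y] order_le_less_trans[OF norm_ge_zero h] t
    unfolding gateaux_deriv_def by auto
  then have "bounded_linear (\<lambda>k. Df ?z k - Df y k)"
    by (rule bounded_linear_sub)
  then have "\<bar>Df ?z h - Df y h\<bar> \<le> onorm (\<lambda>k. Df ?z k - Df y k) * norm h"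
    using onorm by fastforce
  also have "\<dots> \<le> L * (t * norm h) * norm h"
    using lip[OF on_segment[of t]] t by (intro mult_right_mono) auto
  also have "\<dots> \<le> \<bar>L\<bar> * (t * norm h) * norm h"
    using t by (intro mult_right_mono) auto
  also have "\<dots> \<le> \<bar>L\<bar> * norm h * norm h"
    using t by (intro mult_right_mono mult_left_mono) (auto simp: mult_left_le_one_le)
  finally show ?thesis
    using mvt by (simp add: power2_eq_square mult.assoc)
qed

lemma affine_le_quadratic_beyond:
  fixes B K r n :: real
  assumes "0 \<le> B" "0 \<le> K" "0 < r" "r \<le> n"
  shows "B * n + K \<le> (B / r + K / r\<^sup>2) * n\<^sup>2"
proof -
  have "1 \<le> n / r"
    using assms by simp
  then have "B * n \<le> B * (n / r) * n"
    using assms mult_right_mono[of 1 "n / r" "B * n"] by (simp add: mult_ac)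
  moreover have "K \<le> K * (n / r)\<^sup>2"
    using assms by (intro mult_le_cancel_left1[THEN iffD2]) (auto simp: power_mono)
  ultimately show ?thesis
    by (simp add: field_simps power2_eq_square)
qed

lemma quadratic_lower_bound_far:
  fixes f :: "'a::real_normed_vector \<Rightarrow> real"
  assumes "0 \<le> a0" "bounded_linear v0" "bounded_linear w"
    and minor: "\<And>x. - a0 * (norm x)\<^sup>2 + v0 x + c0 \<le> f x" and "0 < r"
  obtains A where "0 \<le> A" "\<And>h. r \<le> norm h \<Longrightarrow> f y + w h - A * (norm h)\<^sup>2 \<le> f (y + h)"
proof
  define B where "B = onorm v0 + onorm w"
  define K where "K = \<bar>f y\<bar> + 2 * a0 * (norm y)\<^sup>2 + onorm v0 * norm y + \<bar>c0\<bar>"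
  have "0 \<le> onorm v0" "0 \<le> onorm w"
    using assms onorm_pos_le by auto
  then have BK: "0 \<le> B" "0 \<le> K"
    using assms(1) by (auto simp: B_def K_def)
  show "0 \<le> 2 * a0 + (B / r + K / r\<^sup>2)"
    using BK assms by simp
  fix h :: 'a
  assume far: "r \<le> norm h"
  have "(norm (y + h))\<^sup>2 \<le> (norm y + norm h)\<^sup>2"
    by (simp add: norm_triangle_ineq power_mono)
  also have "\<dots> \<le> 2 * (norm y)\<^sup>2 + 2 * (norm h)\<^sup>2"
    using sum_squares_bound[of "norm y" "norm h"] by (simp add: power2_sum)
  finally have "a0 * (norm (y + h))\<^sup>2 \<le> a0 * (2 * (norm y)\<^sup>2 + 2 * (norm h)\<^sup>2)"
    using assms(1) by (rule mult_left_mono)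
  moreover have "\<bar>v0 y\<bar> \<le> onorm v0 * norm y" "\<bar>v0 h\<bar> \<le> onorm v0 * norm h"
      "\<bar>w h\<bar> \<le> onorm w * norm h"
    using onorm[OF assms(2), of y] onorm[OF assms(2), of h] onorm[OF assms(3), of h] by auto
  moreover have "v0 (y + h) = v0 y + v0 h"
    using assms(2) by (simp add: linear_simps)
  moreover have "B * norm h + K \<le> (B / r + K / r\<^sup>2) * (norm h)\<^sup>2"
    using affine_le_quadratic_beyond[OF BK \<open>0 < r\<close> far] .
  moreover have "B * norm h = onorm v0 * norm h + onorm w * norm h"
    by (simp add: B_def distrib_right)
  ultimately show "f y + w h - (2 * a0 + (B / r + K / r\<^sup>2)) * (norm h)\<^sup>2 \<le> f (y + h)"
    using minor[of "y + h"] unfolding K_def distrib_right distrib_left by linarith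
qed

lemma quadratic_lower_bound:
  fixes f :: "'a::real_normed_vector \<Rightarrow> real"
  assumes "Phi_lsc_proper f" and "0 < r"
    and gd: "\<And>z. norm (z - y) < r \<Longrightarrow> gateaux_deriv f z (Df z)"
    and lip: "\<And>z. norm (z - y) < r \<Longrightarrow> onorm (\<lambda>h. Df z h - Df y h) \<le> L * norm (z - y)"
  obtains a where "0 \<le> a" "\<And>h. f y + Df y h - a * (norm h)\<^sup>2 \<le> f (y + h)"
proof -
  obtain a0 v0 c0 where minorant: "0 \<le> a0" "bounded_linear v0"
    "\<And>x. - a0 * (norm x)\<^sup>2 + v0 x + c0 \<le> f x"
    using assms(1) unfolding Phi_lsc_proper_def Phi_lsc_minorants_def Phi_lsc_def by auto
  have w: "bounded_linear (Df y)"
    using gd[of y] \<open>0 < r\<close> unfolding gateaux_deriv_def by simp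
  obtain A where "0 \<le> A"
    and far: "\<And>h. r \<le> norm h \<Longrightarrow> f y + Df y h - A * (norm h)\<^sup>2 \<le> f (y + h)"
    using quadratic_lower_bound_far[OF minorant(1,2) w minorant(3) \<open>0 < r\<close>, of y] by blast
  have "f y + Df y h - max A \<bar>L\<bar> * (norm h)\<^sup>2 \<le> f (y + h)" for h
  proof (cases "norm h < r")
    case True
    have "\<bar>L\<bar> * (norm h)\<^sup>2 \<le> max A \<bar>L\<bar> * (norm h)\<^sup>2"
      by (intro mult_right_mono) auto
    with quadratic_lower_bound_near[of y r f Df L h, OF gd lip True] show ?thesis
      by linarith
  next
    case False
    have "A * (norm h)\<^sup>2 \<le> max A \<bar>L\<bar> * (norm h)\<^sup>2"
      by (intro mult_right_mono) auto
    with far[of h] False show ?thesis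
      by linarith
  qed
  with \<open>0 \<le> A\<close> show ?thesis
    using that[of "max A \<bar>L\<bar>"] by auto
qed

lemma subdiff_lsc_of_quadratic_lower_bound:
  fixes f :: "'a::real_inner \<Rightarrow> real"
  assumes "0 \<le> a" "bounded_linear w"
    and bound: "\<And>h. f y + w h - a * (norm h)\<^sup>2 \<le> f (y + h)"
  shows "(a, \<lambda>x. w x + 2 * a * (y \<bullet> x)) \<in> subdiff_lsc f y"
proof -
  have "bounded_linear (\<lambda>x. w x + 2 * a * (y \<bullet> x))"
    using assms(2) by (intro bounded_linear_add bounded_linear_const_mult bounded_linear_inner_right)
  moreover have "w (x - y) + 2 * a * (y \<bullet> (x - y)) - a * (norm x)\<^sup>2 + a * (norm y)\<^sup>2 \<le> f x - f y"
    for x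
  proof -
    have "w (x - y) + 2 * a * (y \<bullet> (x - y)) - a * (norm x)\<^sup>2 + a * (norm y)\<^sup>2
        = w (x - y) - a * (norm (x - y))\<^sup>2"
      by (simp add: power2_norm_eq_inner algebra_simps inner_commute)
    with bound[of "x - y"] show ?thesis
      by simp
  qed
  ultimately show ?thesis
    using assms(1) unfolding subdiff_lsc_def by auto
qed

theorem mainTheorem6:
  fixes f :: "'a::{real_inner, complete_space} \<Rightarrow> real" and xbar :: 'a
  assumes "Phi_lsc_proper f" and "Phi_lsc_convex f" and "locally_C11 f xbar"
  shows "\<exists>\<delta>>0. \<forall>y. norm (y - xbar) < \<delta> \<longrightarrow> subdiff_lsc f y \<noteq> {}"
proof -
  obtain \<delta> Df L where "\<delta> > 0"
    and gd: "\<And>y. norm (y - xbar) < \<delta> \<Longrightarrow> gateaux_deriv f y (Df y)"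
    and lip: "\<And>y z. norm (y - xbar) < \<delta> \<Longrightarrow> norm (z - xbar) < \<delta> \<Longrightarrow>
          onorm (\<lambda>h. Df y h - Df z h) \<le> L * norm (y - z)"
    using assms(3) unfolding locally_C11_def by blast
  have "subdiff_lsc f y \<noteq> {}" if y: "norm (y - xbar) < \<delta> / 2" for y
  proof -
    have inside: "norm (z - xbar) < \<delta>" if "norm (z - y) < \<delta> / 2" for z
      using norm_triangle_lt[of "z - y" "y - xbar" \<delta>] that y by simp
    have "\<delta> / 2 > 0"
      using \<open>\<delta> > 0\<close> by simp
    moreover have "onorm (\<lambda>h. Df z h - Df y h) \<le> L * norm (z - y)" if "norm (z - y) < \<delta> / 2" for z
      using lip[OF inside[OF that] inside] \<open>\<delta> / 2 > 0\<close> by simp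
    ultimately obtain a where "0 \<le> a" and "\<And>h. f y + Df y h - a * (norm h)\<^sup>2 \<le> f (y + h)"
      using quadratic_lower_bound[OF assms(1), of "\<delta> / 2" y Df L] gd inside by blast
    moreover have "bounded_linear (Df y)"
      using gd[OF inside[of y]] \<open>\<delta> > 0\<close> unfolding gateaux_deriv_def by simp
    ultimately show ?thesis
      using subdiff_lsc_of_quadratic_lower_bound[of a "Df y" f y] by blast
  qed
  then show ?thesis
    using \<open>\<delta> > 0\<close> half_gt_zero by blast
qed

end
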